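(* Let $A=[a_{ij}]\in\{0,1\}^{N\times N}$ be the adjacency matrix of a static contact graph on nodes $\{1,\dots,N\}$ (with $a_{ii}=0$) and let $\rho(A)$ be its spectral radius. Let $\beta_0>0$, $\delta>0$, $\kappa>0$ and $0\le\beta_a<\beta_0$, and consider the SAIS system \[ \dot p_i=\beta_0(1-p_i-q_i)\sum_{j=1}^N a_{ij}p_j+\beta_a q_i\sum_{j=1}^N a_{ij}p_j-\delta p_i,\qquad \dot q_i=\kappa(1-p_i-q_i)\sum_{j=1}^N a_{ij}p_j-\beta_a q_i\sum_{j=1}^N a_{ij}p_j, \] $i\in\{1,\dots,N\}$, with initial data that are probabilities ($p_i,q_i\ge0$, $p_i+q_i\le 1$). If the infection strength satisfies \[ \tau=\frac{\beta_0}{\delta}<\frac{1}{\rho(A)}, \] then initial infections die out exponentially, i.e. each $p_i(t)$ converges to $0$ exponentially as $t\to\infty$.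
   Context: $p_i$ and $q_i$ are the (mean-field) probabilities that individual $i$ is infected and alert; $a_{ij}=1$ iff individual $j$ is a neighbor of individual $i$. $\beta_0$: infection rate of susceptible individuals; $\beta_a$: infection rate of alert individuals; $\kappa$: alerting rate; $\delta$: curing rate. $\rho(A)$ is the largest modulus of the eigenvalues of $A$. *)

theory Defs
  imports Complex_Main "Jordan_Normal_Form.Spectral_Radius"
begin

definition adjacency_matrix :: "nat \<Rightarrow> real mat \<Rightarrow> bool" where
  "adjacency_matrix N A \<longleftrightarrow> A \<in> carrier_mat N N \<and>
     (\<forall>i<N. \<forall>j<N. A $$ (i,j) = 0 \<or> A $$ (i,j) = 1) \<and> (\<forall>i<N. A $$ (i,i) = 0)"

definition rho :: "real mat \<Rightarrow> real" where
  "rho A = spectral_radius (map_mat complex_of_real A)"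

end

theory Submission
  imports Defs "HOL-Analysis.Derivative"
begin

text \<open>
  The proof is a Lyapunov argument. First, the probability simplex
  (p i \<ge> 0, q i \<ge> 0, p i + q i \<le> 1) is forward invariant: the vector field is
  quasi-positive, i.e. the derivative of a component that has become negative is bounded
  below by a multiple of the total negative part of the state. Inside the simplex the
  coefficient of the infection pressure in the equation for p i is at most beta0, so
  p' \<le> (beta0 A - delta I) p componentwise. As beta0 rho(A) < delta, pick s with
  rho(A) < s < delta / beta0 and a vector v \<ge> 1 with v A \<le> s v (the column sums of
  the Neumann series of A / s). Then V = v \<bullet> p satisfies V' \<le> - (delta - beta0 s) V,
  so V decays exponentially, and it dominates every p i.
\<close>

section \<open>Spectral radius and nonnegative sub-eigenvectors\<close>

lemma smult_mat_mult_mat_vec: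
  fixes B :: "'a :: comm_ring_1 mat"
  assumes "B \<in> carrier_mat n n" "v \<in> carrier_vec n"
  shows "(c \<cdot>\<^sub>m B) *\<^sub>v v = c \<cdot>\<^sub>v (B *\<^sub>v v)"
  using assms by (intro eq_vecI) (auto simp: scalar_prod_def sum_distrib_left mult.assoc)

lemma spectrum_smult_mat:
  fixes B :: "complex mat"
  assumes B: "B \<in> carrier_mat n n" and c: "c \<noteq> 0" and ev: "ev \<in> spectrum (c \<cdot>\<^sub>m B)"
  shows "ev / c \<in> spectrum B"
proof -
  obtain v where "eigenvector (c \<cdot>\<^sub>m B) v ev"
    using ev unfolding spectrum_def eigenvalue_def by auto
  then have "v \<in> carrier_vec n" "v \<noteq> 0\<^sub>v n" "c \<cdot>\<^sub>v (B *\<^sub>v v) = ev \<cdot>\<^sub>v v"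
    using B unfolding eigenvector_def by (auto simp: smult_mat_mult_mat_vec)
  moreover have "B *\<^sub>v v = (1 / c) \<cdot>\<^sub>v (c \<cdot>\<^sub>v (B *\<^sub>v v))"
    using c by (simp add: smult_smult_assoc)
  ultimately have "eigenvector B v (ev / c)"
    using B unfolding eigenvector_def by (auto simp: smult_smult_assoc)
  then show ?thesis unfolding spectrum_def eigenvalue_def by auto
qed

lemma spectral_radius_smult_mat_le:
  fixes B :: "complex mat"
  assumes B: "B \<in> carrier_mat n n" and n: "n > 0" and c: "c \<noteq> 0"
  shows "spectral_radius (c \<cdot>\<^sub>m B) \<le> norm c * spectral_radius B"
proof -
  obtain ev where ev: "ev \<in> spectrum (c \<cdot>\<^sub>m B)" and eq: "spectral_radius (c \<cdot>\<^sub>m B) = norm ev"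
    using spectral_radius_mem_max(1)[of "c \<cdot>\<^sub>m B" n] B n by auto
  have "norm (ev / c) \<le> spectral_radius B"
    using spectrum_smult_mat[OF B c ev] by (intro spectral_radius_mem_max(2)[OF B n]) auto
  then show ?thesis using eq c by (simp add: norm_divide field_simps)
qed

lemma rho_nonneg:
  assumes "A \<in> carrier_mat n n" "n > 0"
  shows "rho A \<ge> 0"
  using spectral_radius_mem_max(1)[of "map_mat complex_of_real A" n] assms
  unfolding rho_def by auto

lemma rho_smult_le:
  fixes A :: "real mat"
  assumes A: "A \<in> carrier_mat n n" and n: "n > 0" and c: "c \<noteq> 0"
  shows "rho (c \<cdot>\<^sub>m A) \<le> \<bar>c\<bar> * rho A"
proof -
  have "map_mat complex_of_real (c \<cdot>\<^sub>m A) = complex_of_real c \<cdot>\<^sub>m map_mat complex_of_real A"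
    by (rule eq_matI) auto
  then show ?thesis
    using spectral_radius_smult_mat_le[of "map_mat complex_of_real A" n "complex_of_real c"] A n c
    unfolding rho_def by simp
qed

lemma smult_pow_mat:
  fixes A :: "'a :: comm_semiring_1 mat"
  assumes "A \<in> carrier_mat n n"
  shows "(c \<cdot>\<^sub>m A) ^\<^sub>m k = c ^ k \<cdot>\<^sub>m A ^\<^sub>m k"
proof (induction k)
  case (Suc k)
  have "c ^ k \<cdot>\<^sub>m A ^\<^sub>m k * (c \<cdot>\<^sub>m A) = c ^ Suc k \<cdot>\<^sub>m (A ^\<^sub>m k * A)"
    using assms by (simp add: mult_smult_assoc_mat[of _ n n] mult_smult_distrib[of _ n n])
      (rule eq_matI; simp add: ac_simps)
  then show ?case using Suc by simp
qed (use assms in auto)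

lemma pow_mat_nonneg:
  fixes A :: "real mat"
  assumes A: "A \<in> carrier_mat n n" and nonneg: "\<And>i j. i < n \<Longrightarrow> j < n \<Longrightarrow> A $$ (i,j) \<ge> 0"
    and "i < n" "j < n"
  shows "(A ^\<^sub>m k) $$ (i,j) \<ge> 0"
  using \<open>j < n\<close>
proof (induction k arbitrary: j)
  case (Suc k)
  then show ?case
    using A \<open>i < n\<close> nonneg by (auto simp: scalar_prod_def intro!: sum_nonneg)
qed (use A \<open>i < n\<close> in auto)

lemma pow_mat_entries_le_power:
  fixes A :: "real mat"
  assumes A: "A \<in> carrier_mat n n" and s: "rho A < s"
  shows "\<exists>c. \<forall>k i j. i < n \<longrightarrow> j < n \<longrightarrow> \<bar>(A ^\<^sub>m k) $$ (i,j)\<bar> \<le> c * s ^ k"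
proof (cases "n = 0")
  case False
  then have s0: "s > 0" using rho_nonneg[OF A] s by simp
  let ?M = "(1 / s) \<cdot>\<^sub>m A"
  have M: "?M \<in> carrier_mat n n" using A by simp
  have "rho ?M \<le> rho A / s"
    using rho_smult_le[OF A _, of "1 / s"] False s0 by simp
  also have "\<dots> < 1" using s s0 by simp
  finally have "rho ?M < 1" .
  then obtain c where c: "norm_bound (map_mat complex_of_real ?M ^\<^sub>m k) c" for k
    using spectral_radius_jnf_norm_bound_less_1_upper_triangular[of "map_mat complex_of_real ?M" n] M
    unfolding rho_def by fastforce
  have "\<bar>(A ^\<^sub>m k) $$ (i,j)\<bar> \<le> c * s ^ k" if "i < n" "j < n" for k i j
  proof -
    have "map_mat complex_of_real ?M ^\<^sub>m k = map_mat complex_of_real (?M ^\<^sub>m k)"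
      by (rule of_real_hom.mat_hom_pow[OF M, symmetric])
    also have "?M ^\<^sub>m k = (1 / s) ^ k \<cdot>\<^sub>m A ^\<^sub>m k" by (rule smult_pow_mat[OF A])
    finally have "norm (map_mat complex_of_real ((1 / s) ^ k \<cdot>\<^sub>m A ^\<^sub>m k) $$ (i,j)) \<le> c"
      using c[of k] that A unfolding norm_bound_def by auto
    then have "\<bar>(A ^\<^sub>m k) $$ (i,j)\<bar> / s ^ k \<le> c"
      using that A s0 by (simp add: norm_mult norm_power norm_divide power_one_over)
    then show ?thesis using s0 by (simp add: field_simps)
  qed
  then show ?thesis by blast
qed simp

lemma column_sum_pow_mat_Suc:
  fixes A :: "'a :: comm_semiring_1 mat"
  assumes A: "A \<in> carrier_mat n n" and j: "j < n"
  shows "(\<Sum>i<n. (\<Sum>l<n. (A ^\<^sub>m k) $$ (l,i)) * A $$ (i,j)) = (\<Sum>l<n. (A ^\<^sub>m Suc k) $$ (l,j))"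
proof -
  have "(\<Sum>i<n. (\<Sum>l<n. (A ^\<^sub>m k) $$ (l,i)) * A $$ (i,j)) =
      (\<Sum>l<n. \<Sum>i<n. (A ^\<^sub>m k) $$ (l,i) * A $$ (i,j))"
    by (simp add: sum_distrib_right) (rule sum.swap)
  also have "\<dots> = (\<Sum>l<n. (A ^\<^sub>m Suc k) $$ (l,j))"
    using A j by (auto simp: scalar_prod_def lessThan_atLeast0 intro!: sum.cong)
  finally show ?thesis .
qed

lemma summable_column_sum_pow_mat_div:
  fixes A :: "real mat"
  assumes A: "A \<in> carrier_mat n n" and s: "rho A < s" and j: "j < n"
  shows "summable (\<lambda>k. (\<Sum>i<n. (A ^\<^sub>m k) $$ (i,j)) / s ^ k)"
proof -
  define s' where "s' = (rho A + s) / 2"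
  have s': "rho A < s'" "0 < s'" "s' < s"
    using rho_nonneg[OF A] j s unfolding s'_def by auto
  obtain c where c: "\<And>k i j. i < n \<Longrightarrow> j < n \<Longrightarrow> \<bar>(A ^\<^sub>m k) $$ (i,j)\<bar> \<le> c * s' ^ k"
    using pow_mat_entries_le_power[OF A s'(1)] by blast
  show ?thesis
  proof (rule summable_comparison_test')
    show "summable (\<lambda>k. n * c * (s' / s) ^ k)"
      using s' by (intro summable_mult summable_geometric) simp
    have "norm ((\<Sum>i<n. (A ^\<^sub>m k) $$ (i,j)) / s ^ k) \<le> (\<Sum>i<n. \<bar>(A ^\<^sub>m k) $$ (i,j)\<bar>) / s ^ k" for k
      using s' by (auto simp: divide_right_mono sum_abs)
    also have "\<dots> k \<le> n * c * (s' / s) ^ k" for k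
      using c[OF _ j] s' sum_mono[of "{..<n}" "\<lambda>i. \<bar>(A ^\<^sub>m k) $$ (i,j)\<bar>" "\<lambda>_. c * s' ^ k"]
      by (auto simp: divide_right_mono power_divide)
    finally show "norm ((\<Sum>i<n. (A ^\<^sub>m k) $$ (i,j)) / s ^ k) \<le> n * c * (s' / s) ^ k" for k .
  qed
qed

text \<open>
  The vector is the column-sum vector of the Neumann series of A / s, so that
  v A = s (v - 1) \<le> s v.
\<close>
lemma nonneg_mat_left_subeigenvector:
  fixes A :: "real mat"
  assumes A: "A \<in> carrier_mat n n" and nonneg: "\<And>i j. i < n \<Longrightarrow> j < n \<Longrightarrow> A $$ (i,j) \<ge> 0"
    and s: "rho A < s"
  shows "\<exists>v. (\<forall>j<n. v j \<ge> 1) \<and> (\<forall>j<n. (\<Sum>i<n. v i * A $$ (i,j)) \<le> s * v j)"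
proof (cases "n = 0")
  case False
  have s0: "s > 0" using rho_nonneg[OF A] False s by simp
  define u where "u k j = (\<Sum>i<n. (A ^\<^sub>m k) $$ (i,j)) / s ^ k" for k j
  have u_summable: "summable (\<lambda>k. u k j)" if "j < n" for j
    unfolding u_def using summable_column_sum_pow_mat_div[OF A s that] .
  have u_nonneg: "u k j \<ge> 0" if "j < n" for k j
    unfolding u_def using pow_mat_nonneg[OF A nonneg] that s0
    by (intro divide_nonneg_nonneg sum_nonneg) auto
  have u_0: "u 0 j = 1" if "j < n" for j
  proof -
    have "(\<Sum>i<n. (A ^\<^sub>m 0) $$ (i,j)) = (\<Sum>i<n. if i = j then 1 else 0)"
      using A that by (intro sum.cong) auto
    then show ?thesis using that unfolding u_def by simp
  qed
  have u_Suc: "(\<Sum>i<n. u k i * A $$ (i,j)) = s * u (Suc k) j" if "j < n" for k j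
    using column_sum_pow_mat_Suc[OF A that, of k] s0
    unfolding u_def by (simp add: sum_divide_distrib[symmetric])
  define v where "v j = (\<Sum>k. u k j)" for j
  show ?thesis
  proof (intro exI[of _ v] allI impI conjI)
    fix j assume j: "j < n"
    have v_split: "v j = 1 + (\<Sum>k. u (Suc k) j)"
      using suminf_split_head[OF u_summable[OF j]] u_0[OF j] unfolding v_def by simp
    have tail: "summable (\<lambda>k. u (Suc k) j)"
      using summable_Suc_iff[of "\<lambda>k. u k j"] u_summable[OF j] by simp
    then show "1 \<le> v j" using v_split u_nonneg[OF j] by (simp add: suminf_nonneg)
    have "(\<Sum>i<n. v i * A $$ (i,j)) = (\<Sum>i<n. \<Sum>k. u k i * A $$ (i,j))"
      unfolding v_def using u_summable by (intro sum.cong) (auto simp: suminf_mult2)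
    also have "\<dots> = (\<Sum>k. \<Sum>i<n. u k i * A $$ (i,j))"
      using u_summable by (intro suminf_sum[symmetric]) (auto intro: summable_mult2)
    also have "\<dots> = s * (v j - 1)"
      using u_Suc[OF j] suminf_mult[OF tail, of s] v_split by simp
    finally show "(\<Sum>i<n. v i * A $$ (i,j)) \<le> s * v j"
      using s0 by simp
  qed
qed simp

section \<open>Differential inequalities\<close>

lemma lin_comb_bounds:
  fixes a b x y m X C :: real
  assumes a: "a \<ge> 0" and b: "b \<ge> 0" and C: "a + b \<le> C" and m: "m \<ge> 0"
    and x: "x \<ge> - m" "\<bar>x\<bar> \<le> X" and y: "y \<ge> - m" "\<bar>y\<bar> \<le> X"
  shows "a * x + b * y \<ge> - (C * m)" "\<bar>a * x + b * y\<bar> \<le> C * X"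
proof -
  have "a * x \<ge> a * (- m)" "b * y \<ge> b * (- m)"
    using mult_left_mono[OF x(1) a] mult_left_mono[OF y(1) b] by auto
  moreover have "(a + b) * m \<le> C * m" using C m by (rule mult_right_mono)
  ultimately show "a * x + b * y \<ge> - (C * m)" by (simp add: algebra_simps)
  have "\<bar>a * x\<bar> \<le> a * X" "\<bar>b * y\<bar> \<le> b * X"
    using a b x y by (auto simp: abs_mult intro: mult_left_mono)
  moreover have "(a + b) * X \<le> C * X" using C x(2) by (intro mult_right_mono) auto
  ultimately show "\<bar>a * x + b * y\<bar> \<le> C * X"
    using abs_triangle_ineq[of "a * x" "b * y"] by (simp add: algebra_simps)
qed

lemma mult_ge_neg_parts:
  fixes x y a b X Y :: real
  assumes x: "\<bar>x\<bar> \<le> X" "x \<ge> - a" and y: "\<bar>y\<bar> \<le> Y" "y \<ge> - b"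
    and "a \<ge> 0" "b \<ge> 0"
  shows "x * y \<ge> - (Y * a + X * b)"
proof -
  have "Y * a \<ge> 0" "X * b \<ge> 0" using assms by auto
  consider "x \<ge> 0" "y \<ge> 0" | "x \<ge> 0" "y < 0" | "x < 0" "y \<ge> 0" | "x < 0" "y < 0"
    by linarith
  then show ?thesis
  proof cases
    case 2
    have "x * y \<ge> x * (- b)" using 2 y by (intro mult_left_mono) auto
    moreover have "x * b \<le> X * b" using 2 x \<open>b \<ge> 0\<close> by (intro mult_right_mono) auto
    ultimately show ?thesis using \<open>Y * a \<ge> 0\<close> by simp
  next
    case 3
    have "x * y \<ge> (- a) * y" using 3 x by (intro mult_right_mono) auto
    moreover have "a * y \<le> a * Y" using 3 y \<open>a \<ge> 0\<close> by (intro mult_left_mono) auto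
    ultimately show ?thesis using \<open>X * b \<ge> 0\<close> by (simp add: mult.commute)
  qed (use \<open>Y * a \<ge> 0\<close> \<open>X * b \<ge> 0\<close> zero_le_mult_iff[of x y] in linarith)+
qed

lemma real_mvt_within:
  fixes f f' :: "real \<Rightarrow> real"
  assumes "a < b" and "{a..b} \<subseteq> S"
    and der: "\<And>u. u \<in> {a..b} \<Longrightarrow> (f has_real_derivative f' u) (at u within S)"
  shows "\<exists>z\<in>{a<..<b}. f b - f a = (b - a) * f' z"
proof -
  have "(f has_derivative (*) (f' u)) (at u within {a..b})" if "a \<le> u" "u \<le> b" for u
    using der[of u] that \<open>{a..b} \<subseteq> S\<close>
    by (auto intro: has_field_derivative_imp_has_derivative has_field_derivative_subset)
  from mvt_simple[OF \<open>a < b\<close> this] show ?thesis by (auto simp: mult.commute)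
qed

lemma lower_bound_from_deriv_where_negative:
  fixes f f' :: "real \<Rightarrow> real"
  assumes ab: "a \<le> b"
    and der: "\<And>u. u \<in> {a..b} \<Longrightarrow> (f has_real_derivative f' u) (at u within {a..b})"
    and fa: "f a \<ge> 0" and K: "K \<ge> 0"
    and slope: "\<And>u. u \<in> {a..b} \<Longrightarrow> f u < 0 \<Longrightarrow> f' u \<ge> - K"
  shows "f b \<ge> - K * (b - a)"
proof (cases "f b \<ge> 0")
  case True
  moreover have "K * (b - a) \<ge> 0" using K ab by simp
  ultimately show ?thesis by linarith
next
  case False
  define Z where "Z = {a..b} \<inter> f -` {0..}"
  have "closed Z"
    unfolding Z_def using DERIV_continuous_on[OF der]
    by (intro continuous_closed_preimage) auto
  moreover have "a \<in> Z" "bdd_above Z" using ab fa unfolding Z_def by auto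
  ultimately have "Sup Z \<in> Z" by (intro closed_contains_Sup) auto
  define \<tau> where "\<tau> = Sup Z"
  have f\<tau>: "f \<tau> \<ge> 0" and \<tau>: "a \<le> \<tau>" "\<tau> < b"
    using \<open>Sup Z \<in> Z\<close> False unfolding \<tau>_def Z_def by (auto simp: order.order_iff_strict)
  have after_\<tau>: "f u < 0" if "\<tau> < u" "u \<le> b" for u
  proof (rule ccontr)
    assume "\<not> f u < 0"
    then have "u \<in> Z" using that \<tau> unfolding Z_def by auto
    then have "u \<le> \<tau>" unfolding \<tau>_def using \<open>bdd_above Z\<close> by (rule cSup_upper)
    then show False using that by simp
  qed
  obtain z where z: "\<tau> < z" "z < b" and mvt: "f b - f \<tau> = (b - \<tau>) * f' z"
    using real_mvt_within[OF \<open>\<tau> < b\<close> _ der] \<tau> by auto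
  have "f' z \<ge> - K" using slope[of z] after_\<tau>[of z] z \<tau> by auto
  then have "(b - \<tau>) * f' z \<ge> (b - \<tau>) * (- K)"
    using \<tau> by (intro mult_left_mono) auto
  moreover have "(b - \<tau>) * K \<le> (b - a) * K" using \<tau> K by (intro mult_right_mono) auto
  ultimately show ?thesis using mvt f\<tau> by (simp add: mult.commute)
qed

lemma exp_decay_from_deriv_le:
  fixes V V' :: "real \<Rightarrow> real"
  assumes der: "\<And>t. t \<ge> 0 \<Longrightarrow> (V has_real_derivative V' t) (at t within {0..})"
    and decay: "\<And>t. t \<ge> 0 \<Longrightarrow> V' t \<le> - \<alpha> * V t" and t: "t \<ge> 0"
  shows "V t \<le> V 0 * exp (- \<alpha> * t)"
proof (cases "t = 0")
  case False
  define W where "W u = V u * exp (\<alpha> * u)" for u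
  have W_der: "(W has_real_derivative (V' u + \<alpha> * V u) * exp (\<alpha> * u)) (at u within {0..})"
    if "u \<ge> 0" for u
    unfolding W_def using der[OF that]
    by (auto intro!: derivative_eq_intros simp: algebra_simps)
  obtain z where z: "0 < z" "z < t" and mvt: "W t - W 0 = (t - 0) * ((V' z + \<alpha> * V z) * exp (\<alpha> * z))"
    using real_mvt_within[of 0 t "{0..}" W] W_der False t by force
  have "(V' z + \<alpha> * V z) * exp (\<alpha> * z) \<le> 0"
    using decay[of z] z by (simp add: mult_nonpos_nonneg)
  then have "t * ((V' z + \<alpha> * V z) * exp (\<alpha> * z)) \<le> 0"
    using t by (simp add: mult_nonneg_nonpos)
  then have "W t \<le> W 0" using mvt by simp
  then have "V t * exp (\<alpha> * t) \<le> V 0" unfolding W_def by simp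
  then show ?thesis by (simp add: exp_minus field_simps)
qed simp

lemma nonneg_at_right_endpoint:
  fixes f :: "real \<Rightarrow> real"
  assumes "continuous_on {a..b} f" "a < b" "\<And>u. a \<le> u \<Longrightarrow> u < b \<Longrightarrow> f u \<ge> 0"
  shows "f b \<ge> 0"
proof -
  have "closure {a..<b} \<subseteq> {a..b} \<inter> f -` {0..}"
    using assms by (intro closure_minimal continuous_closed_preimage) auto
  then show ?thesis using assms(2) by (auto simp: subset_iff)
qed

lemma nonneg_family_persists:
  fixes x x' :: "'a \<Rightarrow> real \<Rightarrow> real" and t0 t1 L :: real
  assumes fin: "finite I"
    and der: "\<And>k t. k \<in> I \<Longrightarrow> t \<in> {t0..t1} \<Longrightarrow> (x k has_real_derivative x' k t) (at t within {t0..t1})"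
    and start: "\<And>k. k \<in> I \<Longrightarrow> x k t0 \<ge> 0"
    and L: "L \<ge> 0"
    and quasi: "\<And>k t. k \<in> I \<Longrightarrow> t \<in> {t0..t1} \<Longrightarrow> x k t < 0 \<Longrightarrow>
                  x' k t \<ge> - L * (\<Sum>l\<in>I. max 0 (- x l t))"
    and short: "card I * L * (t1 - t0) < 1"
    and k: "k \<in> I" and t: "t \<in> {t0..t1}"
  shows "x k t \<ge> 0"
proof -
  define m where "m u = (\<Sum>l\<in>I. max 0 (- x l u))" for u
  have "continuous_on {t0..t1} m"
    unfolding m_def using DERIV_continuous_on[OF der] by (intro continuous_intros) auto
  then obtain tm where tm: "tm \<in> {t0..t1}" and max: "\<And>u. u \<in> {t0..t1} \<Longrightarrow> m u \<le> m tm"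
    using continuous_attains_sup[of "{t0..t1}" m] t by fastforce
  define M where "M = m tm"
  have M: "M \<ge> 0" unfolding M_def m_def by (intro sum_nonneg) auto
  have neg_part: "max 0 (- x l u) \<le> L * M * (t1 - t0)" if l: "l \<in> I" and u: "u \<in> {t0..t1}" for l u
  proof -
    have "x l u \<ge> - (L * M) * (u - t0)"
    proof (rule lower_bound_from_deriv_where_negative)
      show "(x l has_real_derivative x' l w) (at w within {t0..u})" if "w \<in> {t0..u}" for w
        using der[OF l, of w] that u by (auto intro: has_field_derivative_subset)
      show "x' l w \<ge> - (L * M)" if "w \<in> {t0..u}" "x l w < 0" for w
      proof -
        have "L * m w \<le> L * M" using max[of w] that u L unfolding M_def by (auto intro: mult_left_mono)
        then show ?thesis using quasi[OF l, of w] that u unfolding m_def by auto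
      qed
    qed (use start[OF l] u L M in auto)
    moreover have "(L * M) * (u - t0) \<le> L * M * (t1 - t0)"
      using u L M by (intro mult_left_mono) auto
    ultimately show ?thesis using L M t by (auto simp: mult_nonneg_nonneg)
  qed
  have "m tm \<le> card I * (L * M * (t1 - t0))"
    unfolding m_def[of tm] using neg_part tm by (intro sum_bounded_above) auto
  then have "M \<le> card I * (L * M * (t1 - t0))" unfolding M_def .
  then have "(1 - card I * L * (t1 - t0)) * M \<le> 0" by (simp add: algebra_simps)
  then have "M = 0" using short M by (simp add: mult_le_0_iff)
  have "max 0 (- x k t) \<le> m t" unfolding m_def using fin k by (intro member_le_sum) auto
  then show ?thesis using max[OF t] \<open>M = 0\<close> unfolding M_def by linarith
qed

lemma first_exit_time:
  fixes x :: "'a \<Rightarrow> real \<Rightarrow> real"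
  assumes cont: "\<And>l. l \<in> I \<Longrightarrow> continuous_on {0..} (x l)"
    and init: "\<And>l. l \<in> I \<Longrightarrow> x l 0 \<ge> 0"
    and k: "k \<in> I" and t: "t \<ge> 0" and neg: "x k t < 0"
  obtains t0 where "t0 \<ge> 0" "\<And>l u. l \<in> I \<Longrightarrow> u \<in> {0..t0} \<Longrightarrow> x l u \<ge> 0"
    "\<And>h. h > 0 \<Longrightarrow> \<exists>l\<in>I. \<exists>u\<in>{t0..t0 + h}. x l u < 0"
proof
  define V where "V = {u. u \<ge> 0 \<and> (\<exists>l\<in>I. x l u < 0)}"
  have "t \<in> V" using neg k t unfolding V_def by force
  then have V: "V \<noteq> {}" "bdd_below V" unfolding V_def by (auto intro: bdd_belowI[of _ 0])
  show t0: "Inf V \<ge> 0" using V by (intro cInf_greatest) (auto simp: V_def)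
  have before: "x l u \<ge> 0" if "l \<in> I" "0 \<le> u" "u < Inf V" for l u
  proof (rule ccontr)
    assume "\<not> x l u \<ge> 0"
    then have "u \<in> V" using that unfolding V_def by force
    then have "Inf V \<le> u" using V by (intro cInf_lower) auto
    then show False using that by simp
  qed
  show "x l u \<ge> 0" if l: "l \<in> I" and u: "u \<in> {0..Inf V}" for l u
  proof (cases "u = Inf V")
    case True
    have "continuous_on {0..Inf V} (x l)" using cont[OF l] by (rule continuous_on_subset) auto
    then show ?thesis
      using nonneg_at_right_endpoint[of 0 "Inf V" "x l"] before[OF l] init[OF l] True t0
      by (cases "Inf V = 0") auto
  qed (use before[OF l] u in auto)
  show "\<exists>l\<in>I. \<exists>u\<in>{Inf V..Inf V + h}. x l u < 0" if "h > 0" for h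
  proof (rule ccontr)
    assume "\<not> ?thesis"
    then have "Inf V + h \<le> Inf V"
      using before by (intro cInf_greatest[OF V(1)]) (force simp: V_def not_less)
    then show False using \<open>h > 0\<close> by simp
  qed
qed

text \<open>
  Quasi-positivity makes the nonnegative orthant forward invariant: right after the first
  exit time, the total negative part would be bounded by half of its own maximum.
\<close>
lemma nonneg_family_invariant:
  fixes x x' :: "'a \<Rightarrow> real \<Rightarrow> real"
  assumes fin: "finite I"
    and der: "\<And>k t. k \<in> I \<Longrightarrow> t \<ge> 0 \<Longrightarrow> (x k has_real_derivative x' k t) (at t within {0..})"
    and init: "\<And>k. k \<in> I \<Longrightarrow> x k 0 \<ge> 0"
    and quasi: "\<And>T. T \<ge> 0 \<Longrightarrow> \<exists>L\<ge>0. \<forall>k\<in>I. \<forall>t\<in>{0..T}. x k t < 0 \<longrightarrow>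
                  x' k t \<ge> - L * (\<Sum>l\<in>I. max 0 (- x l t))"
    and k: "k \<in> I" and t: "t \<ge> 0"
  shows "x k t \<ge> 0"
proof (rule ccontr)
  assume "\<not> x k t \<ge> 0"
  moreover have "continuous_on {0..} (x l)" if "l \<in> I" for l
    using der[OF that] by (intro DERIV_continuous_on[where D = "x' l"]) auto
  ultimately obtain t0 where t0: "t0 \<ge> 0" and nonneg: "\<And>l. l \<in> I \<Longrightarrow> x l t0 \<ge> 0"
    and exits: "\<And>h. h > 0 \<Longrightarrow> \<exists>l\<in>I. \<exists>u\<in>{t0..t0 + h}. x l u < 0"
    using first_exit_time[of I x k t] init k t by (metis atLeastAtMost_iff not_le order_refl)
  obtain L where L: "L \<ge> 0" and quasi_L: "\<And>l u. l \<in> I \<Longrightarrow> u \<in> {0..t0 + 1} \<Longrightarrow> x l u < 0 \<Longrightarrow>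
                  x' l u \<ge> - L * (\<Sum>i\<in>I. max 0 (- x i u))"
    using quasi[of "t0 + 1"] t0 by auto
  define h where "h = 1 / (2 * (card I * L + 1))"
  have cL: "card I * L \<ge> 0" using L by simp
  then have h: "0 < h" "h \<le> 1" and short: "card I * L * (t0 + h - t0) < 1"
    unfolding h_def by (auto simp: field_simps)
  have "x l u \<ge> 0" if l: "l \<in> I" and u: "u \<in> {t0..t0 + h}" for l u
  proof (rule nonneg_family_persists[where x = x and x' = x', OF fin _ nonneg L _ short l u])
    show "(x i has_real_derivative x' i w) (at w within {t0..t0 + h})" if "i \<in> I" "w \<in> {t0..t0 + h}" for i w
      using that t0 by (intro has_field_derivative_subset[OF der]) auto
    show "x' i w \<ge> - L * (\<Sum>l\<in>I. max 0 (- x l w))" if "i \<in> I" "w \<in> {t0..t0 + h}" "x i w < 0" for i w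
      using quasi_L[of i w] that t0 h by auto
  qed
  then show False using exits[OF h(1)] by force
qed

section \<open>The SAIS system\<close>

datatype compartment = Infected | Alert | Susceptible

lemma UNIV_compartment: "(UNIV :: compartment set) = {Infected, Alert, Susceptible}"
  using compartment.exhaust by auto

instance compartment :: finite
  by standard (simp add: UNIV_compartment)

locale sais_solution =
  fixes N :: nat and A :: "real mat"
    and beta0 betaa kappa delta :: real
    and p q :: "real \<Rightarrow> nat \<Rightarrow> real"
  assumes adj: "adjacency_matrix N A"
    and par: "beta0 > 0" "delta > 0" "kappa > 0" "0 \<le> betaa" "betaa < beta0"
    and init: "\<forall>i<N. p 0 i \<ge> 0 \<and> q 0 i \<ge> 0 \<and> p 0 i + q 0 i \<le> 1"
    and ode_p: "\<forall>i<N. \<forall>t\<ge>0. ((\<lambda>s. p s i) has_real_derivative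
        (beta0 * (1 - p t i - q t i) * (\<Sum>j<N. A $$ (i,j) * p t j)
         + betaa * q t i * (\<Sum>j<N. A $$ (i,j) * p t j) - delta * p t i)) (at t within {0..})"
    and ode_q: "\<forall>i<N. \<forall>t\<ge>0. ((\<lambda>s. q s i) has_real_derivative
        (kappa * (1 - p t i - q t i) * (\<Sum>j<N. A $$ (i,j) * p t j)
         - betaa * q t i * (\<Sum>j<N. A $$ (i,j) * p t j))) (at t within {0..})"
begin

lemma A_carrier: "A \<in> carrier_mat N N"
  and A_01: "i < N \<Longrightarrow> j < N \<Longrightarrow> A $$ (i,j) = 0 \<or> A $$ (i,j) = 1"
  using adj unfolding adjacency_matrix_def by auto

definition pressure :: "real \<Rightarrow> nat \<Rightarrow> real" where
  "pressure t i = (\<Sum>j<N. A $$ (i,j) * p t j)"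

text \<open>
  The three probabilities of node i are the components of a single family indexed by
  node and compartment, so that the simplex constraint p + q \<le> 1 becomes nonnegativity
  of the susceptible component 1 - p - q, whose derivative is minus the sum of the other two.
\<close>
fun state :: "nat \<times> compartment \<Rightarrow> real \<Rightarrow> real" where
  "state (i, Infected) = (\<lambda>t. p t i)"
| "state (i, Alert) = (\<lambda>t. q t i)"
| "state (i, Susceptible) = (\<lambda>t. 1 - p t i - q t i)"

fun state_deriv :: "nat \<times> compartment \<Rightarrow> real \<Rightarrow> real" where
  "state_deriv (i, Infected) t =
     (beta0 * (1 - p t i - q t i) + betaa * q t i) * pressure t i - delta * p t i"
| "state_deriv (i, Alert) t = (kappa * (1 - p t i - q t i) - betaa * q t i) * pressure t i"
| "state_deriv (i, Susceptible) t =
     delta * p t i - (beta0 + kappa) * (1 - p t i - q t i) * pressure t i"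

lemma state_has_derivative:
  assumes "i < N" "t \<ge> 0"
  shows "(state (i, c) has_real_derivative state_deriv (i, c) t) (at t within {0..})"
proof -
  have p: "((\<lambda>s. p s i) has_real_derivative state_deriv (i, Infected) t) (at t within {0..})"
    using ode_p assms by (simp add: pressure_def algebra_simps)
  have q: "((\<lambda>s. q s i) has_real_derivative state_deriv (i, Alert) t) (at t within {0..})"
    using ode_q assms by (simp add: pressure_def algebra_simps)
  have "((\<lambda>s. 1 - p s i - q s i) has_real_derivative
          0 - state_deriv (i, Infected) t - state_deriv (i, Alert) t) (at t within {0..})"
    by (intro DERIV_diff DERIV_const p q)
  then have "((\<lambda>s. 1 - p s i - q s i) has_real_derivative state_deriv (i, Susceptible) t)
               (at t within {0..})"
    by (simp add: algebra_simps)
  with p q show ?thesis by (cases c) simp_all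
qed

lemma solution_bounded:
  assumes "T \<ge> 0"
  obtains B where "B \<ge> 0" "\<And>t i. t \<in> {0..T} \<Longrightarrow> i < N \<Longrightarrow> \<bar>p t i\<bar> \<le> B \<and> \<bar>q t i\<bar> \<le> B"
proof -
  define F where "F t = (\<Sum>i<N. \<bar>p t i\<bar> + \<bar>q t i\<bar>)" for t
  have cont: "continuous_on {0..T} (state (i, c))" if "i < N" for i c
  proof (rule DERIV_continuous_on)
    show "(state (i, c) has_real_derivative state_deriv (i, c) t) (at t within {0..T})"
      if "t \<in> {0..T}" for t
        using that by (intro has_field_derivative_subset[OF state_has_derivative[OF \<open>i < N\<close>]]) auto
  qed
  have "continuous_on {0..T} F"
    unfolding F_def using cont[of _ Infected] cont[of _ Alert] by (intro continuous_intros) auto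
  then obtain tB where tB: "tB \<in> {0..T}" "\<And>t. t \<in> {0..T} \<Longrightarrow> F t \<le> F tB"
    using continuous_attains_sup[of "{0..T}" F] assms by fastforce
  show ?thesis
  proof
    show "F tB \<ge> 0" unfolding F_def by (intro sum_nonneg) auto
    fix t i assume "t \<in> {0..T}" "i < N"
    then have "\<bar>p t i\<bar> + \<bar>q t i\<bar> \<le> F tB"
      using tB(2)[of t] member_le_sum[of i "{..<N}" "\<lambda>i. \<bar>p t i\<bar> + \<bar>q t i\<bar>"]
      unfolding F_def by fastforce
    then show "\<bar>p t i\<bar> \<le> F tB \<and> \<bar>q t i\<bar> \<le> F tB" by auto
  qed
qed

abbreviation components :: "(nat \<times> compartment) set" where
  "components \<equiv> {..<N} \<times> UNIV"

lemma pressure_bounds: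
  fixes m B :: real
  assumes "i < N" and "\<And>j. j < N \<Longrightarrow> p t j \<ge> - m" "\<And>j. j < N \<Longrightarrow> \<bar>p t j\<bar> \<le> B" "m \<ge> 0"
  shows "pressure t i \<ge> - (N * m)" "\<bar>pressure t i\<bar> \<le> N * B"
proof -
  have "A $$ (i,j) * p t j \<ge> - m" "\<bar>A $$ (i,j) * p t j\<bar> \<le> B" if "j < N" for j
    using A_01[OF \<open>i < N\<close> that] assms(2,3)[OF that] \<open>m \<ge> 0\<close> by auto
  then show "pressure t i \<ge> - (N * m)" "\<bar>pressure t i\<bar> \<le> N * B"
    unfolding pressure_def using sum_mono[of "{..<N}" "\<lambda>_. - m"] sum_abs[of _ "{..<N}"]
      sum_mono[of "{..<N}" "\<lambda>j. \<bar>A $$ (i,j) * p t j\<bar>" "\<lambda>_. B"]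
    by (auto intro: order_trans)
qed

text \<open>
  Every derivative is an affine function of the infection pressure; when the component
  itself is negative, the coefficients can only be pushed below zero by the negative
  parts of the other components.
\<close>
lemma state_deriv_decomposition:
  fixes m X :: real
  assumes i: "i < N" and neg: "state (i, c) t < 0" and m: "m \<ge> 0"
    and lower: "\<And>c'. state (i, c') t \<ge> - m" and bound: "\<And>c'. \<bar>state (i, c') t\<bar> \<le> X"
  shows "\<exists>a d. state_deriv (i, c) t = a * pressure t i + d \<and>
           a \<ge> - ((beta0 + betaa + kappa) * m) \<and> \<bar>a\<bar> \<le> (beta0 + betaa + kappa) * X \<and>
           d \<ge> - (delta * m)"
proof -
  let ?C = "beta0 + betaa + kappa" and ?S = "1 - p t i - q t i"
  have p: "p t i \<ge> - m" "\<bar>p t i\<bar> \<le> X" and q: "q t i \<ge> - m" "\<bar>q t i\<bar> \<le> X"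
    and S: "?S \<ge> - m" "\<bar>?S\<bar> \<le> X"
    using lower[of Infected] lower[of Alert] lower[of Susceptible]
      bound[of Infected] bound[of Alert] bound[of Susceptible] by simp_all
  show ?thesis
  proof (cases c)
    case Infected
    then have "p t i < 0" using neg by simp
    then show ?thesis
      using lin_comb_bounds[of beta0 betaa ?C m ?S X "q t i"] S q par m
      by (intro exI[of _ "beta0 * ?S + betaa * q t i"] exI[of _ "- delta * p t i"])
        (auto simp: Infected mult_nonneg_nonneg)
  next
    case Alert
    then have "q t i < 0" using neg by simp
    then show ?thesis
      using lin_comb_bounds[of kappa betaa ?C m ?S X "- q t i"] S q par m
      by (intro exI[of _ "kappa * ?S + betaa * (- q t i)"] exI[of _ 0])
        (auto simp: Alert mult_nonneg_nonneg)
  next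
    case Susceptible
    then have "?S < 0" using neg by simp
    then have "(beta0 + kappa) * - ?S \<ge> - (?C * m) \<and> \<bar>(beta0 + kappa) * - ?S\<bar> \<le> ?C * X"
      using lin_comb_bounds[of "beta0 + kappa" 0 ?C m "- ?S" X "- ?S"] S par m by auto
    moreover have "state_deriv (i, c) t = (beta0 + kappa) * - ?S * pressure t i + delta * p t i"
      by (simp add: Susceptible algebra_simps)
    moreover have "delta * p t i \<ge> - (delta * m)"
      using mult_left_mono[OF p(1), of delta] par by simp
    ultimately show ?thesis by blast
  qed
qed

lemma state_quasi_positive:
  assumes "T \<ge> 0"
  shows "\<exists>L\<ge>0. \<forall>k\<in>components. \<forall>t\<in>{0..T}. state k t < 0 \<longrightarrow>
           state_deriv k t \<ge> - L * (\<Sum>l\<in>components. max 0 (- state l t))"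
proof -
  obtain B where B: "B \<ge> 0" "\<And>t i. t \<in> {0..T} \<Longrightarrow> i < N \<Longrightarrow> \<bar>p t i\<bar> \<le> B \<and> \<bar>q t i\<bar> \<le> B"
    using solution_bounded[OF assms] by blast
  define C where "C = beta0 + betaa + kappa"
  define L where "L = C * N * (1 + 3 * B) + delta"
  have "L \<ge> 0" unfolding L_def C_def using B(1) par by auto
  moreover have "state_deriv (i, c) t \<ge> - L * (\<Sum>l\<in>components. max 0 (- state l t))"
    if i: "i < N" and t: "t \<in> {0..T}" and neg: "state (i, c) t < 0" for i c t
  proof -
    define m where "m = (\<Sum>l\<in>components. max 0 (- state l t))"
    have m: "m \<ge> 0" unfolding m_def by (intro sum_nonneg) auto
    have lower: "state (j, c') t \<ge> - m" if "j < N" for j c'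
    proof -
      have "max 0 (- state (j, c') t) \<le> m"
        unfolding m_def using that by (intro member_le_sum) auto
      then show ?thesis by simp
    qed
    have bound: "\<bar>state (i, c') t\<bar> \<le> 1 + 2 * B" for c'
      using B(2)[OF t i] B(1) by (cases c') auto
    obtain a d where deriv: "state_deriv (i, c) t = a * pressure t i + d"
      and a: "a \<ge> - (C * m)" "\<bar>a\<bar> \<le> C * (1 + 2 * B)" and d: "d \<ge> - (delta * m)"
      using state_deriv_decomposition[OF i neg m lower[OF i] bound] unfolding C_def by blast
    have P: "pressure t i \<ge> - (N * m)" "\<bar>pressure t i\<bar> \<le> N * B"
      using pressure_bounds[where B = B, OF i _ _ m] lower[of _ Infected] B(2)[OF t] by auto
    have "a * pressure t i \<ge> - (N * B * (C * m) + C * (1 + 2 * B) * (N * m))"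
      using mult_ge_neg_parts[OF a(2,1) P(2,1)] m par unfolding C_def by simp
    moreover have "N * B * (C * m) + C * (1 + 2 * B) * (N * m) + delta * m = L * m"
      unfolding L_def by (simp add: algebra_simps)
    ultimately show ?thesis using deriv d unfolding m_def by simp
  qed
  ultimately show ?thesis by blast
qed

lemma state_nonneg:
  assumes "i < N" "t \<ge> 0"
  shows "state (i, c) t \<ge> 0"
proof -
  have der: "(state k has_real_derivative state_deriv k u) (at u within {0..})"
    if "k \<in> components" "u \<ge> 0" for k u
    using that state_has_derivative by auto
  have start: "state k 0 \<ge> 0" if "k \<in> components" for k
    using that init by (cases k; cases "snd k") auto
  show ?thesis
    using nonneg_family_invariant[of components state state_deriv, OF _ der start state_quasi_positive] assms
    by auto
qed

lemma infected_nonneg: "i < N \<Longrightarrow> t \<ge> 0 \<Longrightarrow> p t i \<ge> 0"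
  using state_nonneg[of i t Infected] by simp

lemma alert_nonneg: "i < N \<Longrightarrow> t \<ge> 0 \<Longrightarrow> q t i \<ge> 0"
  using state_nonneg[of i t Alert] by simp

lemma weighted_infected_deriv_le:
  assumes v: "\<And>j. j < N \<Longrightarrow> v j \<ge> 0" "\<And>j. j < N \<Longrightarrow> (\<Sum>i<N. v i * A $$ (i,j)) \<le> s * v j"
    and t: "t \<ge> 0"
  shows "(\<Sum>i<N. v i * state_deriv (i, Infected) t) \<le> (beta0 * s - delta) * (\<Sum>i<N. v i * p t i)"
proof -
  have "state_deriv (i, Infected) t \<le> beta0 * pressure t i - delta * p t i" if i: "i < N" for i
  proof -
    have "pressure t i \<ge> 0"
      unfolding pressure_def using A_01[OF i] infected_nonneg[OF _ t] by (force intro: sum_nonneg)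
    moreover have "beta0 * (1 - p t i - q t i) + betaa * q t i \<le> beta0"
      using infected_nonneg[OF i t] alert_nonneg[OF i t] par mult_right_mono[of betaa beta0 "q t i"]
      by (simp add: algebra_simps add_increasing)
    ultimately show ?thesis by (simp add: mult_right_mono)
  qed
  then have "(\<Sum>i<N. v i * state_deriv (i, Infected) t) \<le> (\<Sum>i<N. v i * (beta0 * pressure t i - delta * p t i))"
    using v(1) by (intro sum_mono mult_left_mono) auto
  also have "\<dots> = beta0 * (\<Sum>j<N. (\<Sum>i<N. v i * A $$ (i,j)) * p t j) - delta * (\<Sum>i<N. v i * p t i)"
  proof -
    have "(\<Sum>i<N. v i * pressure t i) = (\<Sum>i<N. \<Sum>j<N. v i * A $$ (i,j) * p t j)"
      unfolding pressure_def by (simp add: sum_distrib_left mult.assoc)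
    also have "\<dots> = (\<Sum>j<N. (\<Sum>i<N. v i * A $$ (i,j)) * p t j)"
      by (subst sum.swap) (simp add: sum_distrib_right)
    moreover have "(\<Sum>i<N. v i * (beta0 * pressure t i - delta * p t i)) =
        beta0 * (\<Sum>i<N. v i * pressure t i) - delta * (\<Sum>i<N. v i * p t i)"
      by (simp add: right_diff_distrib sum_subtractf sum_distrib_left mult.left_commute)
    ultimately show ?thesis by simp
  qed
  also have "\<dots> \<le> beta0 * (\<Sum>j<N. s * v j * p t j) - delta * (\<Sum>i<N. v i * p t i)"
    using v(2) infected_nonneg[OF _ t] par by (auto intro!: sum_mono mult_right_mono mult_left_mono)
  also have "\<dots> = (beta0 * s - delta) * (\<Sum>i<N. v i * p t i)"
    by (simp add: sum_distrib_left[symmetric] mult.assoc left_diff_distrib)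
  finally show ?thesis .
qed

lemma infected_exp_decay:
  assumes tau: "(beta0 / delta) * rho A < 1"
  shows "\<exists>\<alpha>>0. \<exists>C. \<forall>i<N. \<forall>t\<ge>0. \<bar>p t i\<bar> \<le> C * exp (- \<alpha> * t)"
proof -
  define s where "s = (rho A + delta / beta0) / 2"
  have "rho A < delta / beta0" using tau par by (simp add: field_simps)
  then have s: "rho A < s" "beta0 * s < delta" unfolding s_def using par by (auto simp: field_simps)
  obtain v where v: "\<forall>j<N. v j \<ge> 1" "\<forall>j<N. (\<Sum>i<N. v i * A $$ (i,j)) \<le> s * v j"
    using nonneg_mat_left_subeigenvector[OF A_carrier _ s(1)] A_01 by force
  define \<alpha> where "\<alpha> = delta - beta0 * s"
  define V where "V t = (\<Sum>i<N. v i * p t i)" for t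
  have decay: "V t \<le> V 0 * exp (- \<alpha> * t)" if "t \<ge> 0" for t
  proof (rule exp_decay_from_deriv_le[OF _ _ that])
    show "(V has_real_derivative (\<Sum>i<N. v i * state_deriv (i, Infected) u)) (at u within {0..})"
      if "u \<ge> 0" for u
      unfolding V_def using state_has_derivative[of _ u Infected] that
      by (auto intro!: DERIV_sum DERIV_cmult)
    show "(\<Sum>i<N. v i * state_deriv (i, Infected) u) \<le> - \<alpha> * V u" if "u \<ge> 0" for u
      using weighted_infected_deriv_le[of v s u] v that unfolding V_def \<alpha>_def by force
  qed
  have dominated: "\<bar>p t i\<bar> \<le> V t" if "t \<ge> 0" "i < N" for t i
  proof -
    have "\<bar>p t i\<bar> \<le> v i * p t i"
      using v(1) infected_nonneg[OF that(2,1)] that by (simp add: mult_le_cancel_right1)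
    also have "\<dots> \<le> V t"
      unfolding V_def using v(1) infected_nonneg[OF _ that(1)] that
      by (intro member_le_sum) auto
    finally show ?thesis .
  qed
  have "\<forall>i<N. \<forall>t\<ge>0. \<bar>p t i\<bar> \<le> V 0 * exp (- \<alpha> * t)"
    using decay dominated by (blast intro: order_trans)
  moreover have "\<alpha> > 0" using s unfolding \<alpha>_def by simp
  ultimately show ?thesis by blast
qed

end

theorem theorem2:
  fixes N :: nat and A :: "real mat"
    and beta0 betaa kappa delta :: real
    and p q :: "real \<Rightarrow> nat \<Rightarrow> real"
  assumes adj: "adjacency_matrix N A"
    and par: "beta0 > 0" "delta > 0" "kappa > 0" "0 \<le> betaa" "betaa < beta0"
    and init: "\<forall>i<N. p 0 i \<ge> 0 \<and> q 0 i \<ge> 0 \<and> p 0 i + q 0 i \<le> 1"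
    and ode_p: "\<forall>i<N. \<forall>t\<ge>0. ((\<lambda>s. p s i) has_real_derivative
        (beta0 * (1 - p t i - q t i) * (\<Sum>j<N. A $$ (i,j) * p t j)
         + betaa * q t i * (\<Sum>j<N. A $$ (i,j) * p t j) - delta * p t i)) (at t within {0..})"
    and ode_q: "\<forall>i<N. \<forall>t\<ge>0. ((\<lambda>s. q s i) has_real_derivative
        (kappa * (1 - p t i - q t i) * (\<Sum>j<N. A $$ (i,j) * p t j)
         - betaa * q t i * (\<Sum>j<N. A $$ (i,j) * p t j))) (at t within {0..})"
    and tau: "(beta0 / delta) * rho A < 1"
  shows "\<forall>i<N. \<exists>C \<alpha>. \<alpha> > 0 \<and> (\<forall>t\<ge>0. \<bar>p t i\<bar> \<le> C * exp (- \<alpha> * t))"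
proof -
  interpret sais_solution N A beta0 betaa kappa delta p q
    by (rule sais_solution.intro) (fact adj par init ode_p ode_q)+
  show ?thesis using infected_exp_decay[OF tau] by blast
qed

end
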